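(* (a) Let $M\ge0$, let $u_1,\dots,u_M$ be nonzero complex numbers, and let $u_0,z\in\mathbb{C}$ with $z\notin\{u_0,\dots,u_M\}$. Then \[ \frac{1}{z-u_0}=\sum_{k=0}^M\frac{1}{z-u_k}\prod_{j=k+1}^M\frac{1-u_0/u_j}{1-z/u_j}. \] (b) Let $u_1,u_2,\dots$ be nonzero complex numbers for which there is a constant $c>0$ with $|u_j|\ge c j^2$ for all $j\ge1$, and let $u_0,z\in\mathbb{C}$ with $z\notin\{u_0,u_1,u_2,\dots\}$. Then \[ \frac{1}{z-u_0}=\sum_{k=0}^\infty\frac{1}{z-u_k}\prod_{j=k+1}^\infty\frac{1-u_0/u_j}{1-z/u_j}, \] where the infinite products and the series converge. *)

theory Defs
  imports "HOL-Analysis.Analysis"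
begin

end

theory Submission
  imports Defs
begin

text \<open>
  The finite identity is proved by induction on \<open>M\<close>: appending the index \<open>v = u (M+1)\<close>
  multiplies the old sum by the factor \<open>(1 - u\<^sub>0/v) / (1 - z/v)\<close> and adds \<open>1/(z - v)\<close>,
  and this map fixes \<open>1/(z - u\<^sub>0)\<close>.

  For the series, let \<open>P\<^sub>k\<close> be the tail product over \<open>j > k\<close>. Since
  \<open>P\<^sub>k = (\<Prod>j=k+1..N. \<dots>) * P\<^sub>N\<close>, the \<open>N\<close>-th partial sum is \<open>P\<^sub>N\<close> times the finite
  sum, i.e. \<open>P\<^sub>N / (z - u\<^sub>0)\<close>. The factors differ from 1 by \<open>|z - u\<^sub>0| / |u\<^sub>j - z|\<close>,
  which is \<open>O(1/|u\<^sub>j|)\<close> and hence summable when \<open>|u\<^sub>j| \<ge> c j\<^sup>2\<close>; so the products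
  converge absolutely and their tails \<open>P\<^sub>N\<close> tend to 1.
\<close>

lemma partial_fraction_factor_step:
  fixes a v z :: "'a::field"
  assumes "v \<noteq> 0" "v \<noteq> z" "z \<noteq> a"
  shows "(1 - a / v) / (1 - z / v) * (1 / (z - a)) + 1 / (z - v) = 1 / (z - a)"
proof -
  have "v - z \<noteq> 0" "z - a \<noteq> 0" "z - v \<noteq> 0" using assms by auto
  with assms show ?thesis by (simp add: divide_simps) algebra
qed

lemma partial_fraction_factor_minus_1:
  fixes a v z :: "'a::field"
  assumes "v \<noteq> 0" "v \<noteq> z"
  shows "(1 - a / v) / (1 - z / v) - 1 = (z - a) / (v - z)"
  using assms by (simp add: divide_simps)

lemma partial_fraction_expansion_finite:
  fixes u :: "nat \<Rightarrow> 'a::field"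
  assumes "\<forall>j\<in>{1..M}. u j \<noteq> 0" "z \<notin> u ` {0..M}"
  shows "1 / (z - u 0) = (\<Sum>k=0..M. 1 / (z - u k) * (\<Prod>j=k+1..M. (1 - u 0 / u j) / (1 - z / u j)))"
  using assms
proof (induction M)
  case 0
  then show ?case by simp
next
  case (Suc M)
  define g where "g j = (1 - u 0 / u j) / (1 - z / u j)" for j
  from Suc.prems have "\<forall>j\<in>{1..M}. u j \<noteq> 0" "z \<notin> u ` {0..M}" by auto
  with Suc.IH have IH: "1 / (z - u 0) = (\<Sum>k=0..M. 1 / (z - u k) * (\<Prod>j=k+1..M. g j))"
    by (simp add: g_def)
  have "(\<Sum>k=0..Suc M. 1 / (z - u k) * (\<Prod>j=k+1..Suc M. g j))
      = g (Suc M) * (\<Sum>k=0..M. 1 / (z - u k) * (\<Prod>j=k+1..M. g j)) + 1 / (z - u (Suc M))"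
    by (simp add: sum_distrib_left prod.nat_ivl_Suc' mult_ac)
  also have "\<dots> = g (Suc M) * (1 / (z - u 0)) + 1 / (z - u (Suc M))"
    by (simp only: IH[symmetric])
  also have "\<dots> = 1 / (z - u 0)"
    unfolding g_def by (rule partial_fraction_factor_step) (use Suc.prems in force)+
  finally show ?case by (simp add: g_def)
qed

lemma prodinf_shift_split:
  fixes f :: "nat \<Rightarrow> 'a::{real_normed_field,banach}"
  assumes "convergent_prod f" "k \<le> n"
  shows "(\<Prod>i. f (i + k)) = (\<Prod>j=k..<n. f j) * (\<Prod>i. f (i + n))"
proof -
  have "(\<lambda>i. f (i + k)) has_prod ((\<Prod>i<n-k. f (i + k)) * (\<Prod>i. f (i + (n - k) + k)))"
    using assms(1) by (intro has_prod_ignore_initial_segment') simp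
  moreover have "(\<Prod>i<n-k. f (i + k)) = (\<Prod>j=k..<n. f j)"
    using assms(2) prod.shift_bounds_nat_ivl[of f 0 k "n - k"] by (simp add: atLeast0LessThan)
  ultimately show ?thesis
    using assms(2) by (auto dest: has_prod_unique)
qed

lemma norm_prodinf_minus_1_le:
  fixes f :: "nat \<Rightarrow> 'a::{real_normed_field,banach}"
  assumes summable: "summable (\<lambda>i. norm (f i - 1))"
  shows "norm (prodinf f - 1) \<le> exp (\<Sum>i. norm (f i - 1)) - 1"
proof (rule LIMSEQ_le_const2)
  have "convergent_prod f"
    using summable by (intro abs_convergent_prod_imp_convergent_prod summable_imp_abs_convergent_prod)
  then show "(\<lambda>n. norm ((\<Prod>i\<le>n. f i) - 1)) \<longlonglongrightarrow> norm (prodinf f - 1)"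
    by (intro tendsto_intros convergent_prod_LIMSEQ)
  show "\<exists>N. \<forall>n\<ge>N. norm ((\<Prod>i\<le>n. f i) - 1) \<le> exp (\<Sum>i. norm (f i - 1)) - 1"
  proof (intro exI allI impI)
    fix n
    have "norm ((\<Prod>i\<le>n. f i) - 1) = norm ((\<Prod>i\<le>n. 1 + (f i - 1)) - 1)"
      by simp
    also have "\<dots> \<le> (\<Prod>i\<le>n. 1 + norm (f i - 1)) - 1"
      by (rule norm_prod_minus1_le_prod_minus1)
    also have "(\<Prod>i\<le>n. 1 + norm (f i - 1)) \<le> exp (\<Sum>i\<le>n. norm (f i - 1))"
      by (rule prod_le_exp_sum) auto
    also have "(\<Sum>i\<le>n. norm (f i - 1)) \<le> (\<Sum>i. norm (f i - 1))"
      by (rule sum_le_suminf[OF summable]) auto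
    finally show "norm ((\<Prod>i\<le>n. f i) - 1) \<le> exp (\<Sum>i. norm (f i - 1)) - 1" by simp
  qed
qed

lemma suminf_tail_tendsto_0:
  fixes f :: "nat \<Rightarrow> 'a::real_normed_vector"
  assumes "summable f"
  shows "(\<lambda>k. \<Sum>i. f (i + k)) \<longlonglongrightarrow> 0"
proof -
  have "(\<lambda>k. suminf f - (\<Sum>i<k. f i)) \<longlonglongrightarrow> suminf f - suminf f"
    by (intro tendsto_intros summable_LIMSEQ assms)
  then show ?thesis
    by (simp add: suminf_minus_initial_segment[OF assms])
qed

lemma prodinf_tail_tendsto_1:
  fixes f :: "nat \<Rightarrow> 'a::{real_normed_field,banach}"
  assumes summable: "summable (\<lambda>i. norm (f i - 1))"
  shows "(\<lambda>k. \<Prod>i. f (i + k)) \<longlonglongrightarrow> 1"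
proof -
  have "(\<lambda>k. exp (\<Sum>i. norm (f (i + k) - 1)) - 1) \<longlonglongrightarrow> exp 0 - 1"
    by (intro tendsto_intros suminf_tail_tendsto_0 summable)
  then have "(\<lambda>k. exp (\<Sum>i. norm (f (i + k) - 1)) - 1) \<longlonglongrightarrow> 0"
    by simp
  then have "(\<lambda>k. (\<Prod>i. f (i + k)) - 1) \<longlonglongrightarrow> 0"
    by (rule Lim_null_comparison[rotated], intro always_eventually allI norm_prodinf_minus_1_le)
       (rule summable_ignore_initial_segment[OF summable])
  then show ?thesis
    by (simp add: LIM_zero_iff)
qed

lemma summable_partial_fraction_factor_minus_1:
  fixes u :: "nat \<Rightarrow> 'a::real_normed_field"
  assumes summable: "summable (\<lambda>j. inverse (norm (u j)))"
    and nonzero: "eventually (\<lambda>j. u j \<noteq> 0) sequentially"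
  shows "summable (\<lambda>j. norm ((1 - a / u j) / (1 - z / u j) - 1))"
proof (rule summable_comparison_test_ev)
  have "eventually (\<lambda>j. inverse (norm (u j)) < inverse (2 * norm z + 1)) sequentially"
    using summable_LIMSEQ_zero[OF summable] by (rule order_tendstoD) (simp add: add_nonneg_pos)
  with nonzero show "eventually (\<lambda>j. norm (norm ((1 - a / u j) / (1 - z / u j) - 1))
      \<le> 2 * norm (z - a) * inverse (norm (u j))) sequentially"
  proof eventually_elim
    case (elim j)
    then have large: "norm (u j) > 2 * norm z + 1"
      using inverse_less_imp_less[of "norm (u j)" "2 * norm z + 1"] by simp
    then have "norm (u j) \<noteq> norm z"
      using norm_ge_zero[of z] by linarith
    then have "u j \<noteq> z"
      by blast
    with elim have "norm ((1 - a / u j) / (1 - z / u j) - 1) = norm (z - a) / norm (u j - z)"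
      by (simp add: partial_fraction_factor_minus_1 norm_divide)
    also have "\<dots> \<le> norm (z - a) / (norm (u j) / 2)"
    proof (intro divide_left_mono mult_pos_pos)
      show "norm (u j) / 2 \<le> norm (u j - z)" "0 < norm (u j) / 2"
        using norm_triangle_ineq2[of "u j" z] norm_ge_zero[of z] large by linarith+
      then show "0 < norm (u j - z)"
        by linarith
    qed simp
    also have "\<dots> = 2 * norm (z - a) * inverse (norm (u j))"
      by (simp add: field_simps)
    finally show ?case
      by simp
  qed
  show "summable (\<lambda>j. 2 * norm (z - a) * inverse (norm (u j)))"
    using summable by (rule summable_mult)
qed

lemma summable_inverse_norm_of_quadratic_growth:
  fixes u :: "nat \<Rightarrow> 'a::real_normed_vector"
  assumes "c > 0" "\<forall>j\<ge>1. norm (u j) \<ge> c * (real j)^2"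
  shows "summable (\<lambda>j. inverse (norm (u j)))"
proof (rule summable_comparison_test_ev)
  show "eventually (\<lambda>j. norm (inverse (norm (u j))) \<le> inverse c * inverse (real j ^ 2)) sequentially"
  proof (rule eventually_sequentiallyI)
    fix j :: nat
    assume "j \<ge> 1"
    then have "c * (real j)^2 > 0" "norm (u j) \<ge> c * (real j)^2"
      using assms by auto
    then show "norm (inverse (norm (u j))) \<le> inverse c * inverse (real j ^ 2)"
      by (simp add: le_imp_inverse_le flip: mult_inverse_of_nat_commute inverse_mult_distrib)
  qed
  show "summable (\<lambda>j. inverse c * inverse (real j ^ 2))"
    by (intro summable_mult inverse_power_summable) simp
qed

theorem partial_fraction_expansion_infinite:
  fixes u :: "nat \<Rightarrow> 'a::{real_normed_field,banach}"
  assumes summable: "summable (\<lambda>j. inverse (norm (u j)))"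
    and nonzero: "\<forall>j\<ge>1. u j \<noteq> 0" and z: "z \<notin> range u"
  defines "P k \<equiv> \<Prod>i. (1 - u 0 / u (i + k + 1)) / (1 - z / u (i + k + 1))"
  shows "(\<lambda>i. (1 - u 0 / u (i + k + 1)) / (1 - z / u (i + k + 1))) has_prod P k"
    and "(\<lambda>k. 1 / (z - u k) * P k) sums (1 / (z - u 0))"
proof -
  define g where "g j = (1 - u 0 / u j) / (1 - z / u j)" for j
  have P_tail: "P k = (\<Prod>i. g (i + Suc k))" for k
    by (simp add: P_def g_def)
  have "eventually (\<lambda>j. u j \<noteq> 0) sequentially"
    using nonzero by (auto intro: eventually_sequentiallyI)
  then have deviation: "summable (\<lambda>j. norm (g j - 1))"
    unfolding g_def using summable by (intro summable_partial_fraction_factor_minus_1)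
  then have convergent: "convergent_prod g"
    by (intro abs_convergent_prod_imp_convergent_prod summable_imp_abs_convergent_prod)
  then have "convergent_prod (\<lambda>i. g (i + Suc k))"
    by (simp only: convergent_prod_iff_shift)
  then have "(\<lambda>i. g (i + Suc k)) has_prod P k"
    unfolding P_tail by (rule convergent_prod_has_prod)
  then show "(\<lambda>i. (1 - u 0 / u (i + k + 1)) / (1 - z / u (i + k + 1))) has_prod P k"
    by (simp add: g_def)
  have P_split: "P k = (\<Prod>j=k+1..N. g j) * P N" if "k \<le> N" for k N
    using prodinf_shift_split[OF convergent, of "Suc k" "Suc N"] that
    by (simp add: P_tail atLeastLessThanSuc_atLeastAtMost)
  have partial_sums: "(\<Sum>k\<le>N. 1 / (z - u k) * P k) = P N * (1 / (z - u 0))" for N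
  proof -
    have "(\<Sum>k\<le>N. 1 / (z - u k) * P k) = P N * (\<Sum>k=0..N. 1 / (z - u k) * (\<Prod>j=k+1..N. g j))"
      by (simp add: atMost_atLeast0 P_split sum_distrib_left mult_ac)
    also have "(\<Sum>k=0..N. 1 / (z - u k) * (\<Prod>j=k+1..N. g j)) = 1 / (z - u 0)"
      unfolding g_def using nonzero z
      by (intro partial_fraction_expansion_finite[symmetric]) auto
    finally show ?thesis .
  qed
  have "P = (\<lambda>k. \<Prod>i. g (i + Suc k))"
    using P_tail by blast
  then have "P \<longlonglongrightarrow> 1"
    using LIMSEQ_Suc[OF prodinf_tail_tendsto_1[OF deviation]] by simp
  then have "(\<lambda>N. P N * (1 / (z - u 0))) \<longlonglongrightarrow> 1 * (1 / (z - u 0))"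
    by (intro tendsto_intros)
  then show "(\<lambda>k. 1 / (z - u k) * P k) sums (1 / (z - u 0))"
    unfolding sums_def_le partial_sums by simp
qed

theorem lemma5p1:
  shows "(\<forall>(M::nat) (u::nat \<Rightarrow> complex) (z::complex).
            (\<forall>j\<in>{1..M}. u j \<noteq> 0) \<and> z \<notin> u ` {0..M} \<longrightarrow>
            1 / (z - u 0) =
              (\<Sum>k=0..M. 1 / (z - u k) *
                 (\<Prod>j=k+1..M. (1 - u 0 / u j) / (1 - z / u j))))
       \<and> (\<forall>(u::nat \<Rightarrow> complex) (z::complex) (c::real).
            c > 0 \<and> (\<forall>j\<ge>1. u j \<noteq> 0 \<and> norm (u j) \<ge> c * (real j)^2) \<and>
            z \<notin> range u \<longrightarrow>
            (\<exists>P::nat \<Rightarrow> complex.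
               (\<forall>k. (\<lambda>i. (1 - u 0 / u (i + k + 1)) / (1 - z / u (i + k + 1))) has_prod P k) \<and>
               (\<lambda>k. 1 / (z - u k) * P k) sums (1 / (z - u 0))))"
proof (intro conjI allI impI)
  fix M and u :: "nat \<Rightarrow> complex" and z
  assume "(\<forall>j\<in>{1..M}. u j \<noteq> 0) \<and> z \<notin> u ` {0..M}"
  then show "1 / (z - u 0) = (\<Sum>k=0..M. 1 / (z - u k) * (\<Prod>j=k+1..M. (1 - u 0 / u j) / (1 - z / u j)))"
    by (intro partial_fraction_expansion_finite) auto
next
  fix u :: "nat \<Rightarrow> complex" and z and c :: real
  assume assms: "c > 0 \<and> (\<forall>j\<ge>1. u j \<noteq> 0 \<and> norm (u j) \<ge> c * (real j)^2) \<and> z \<notin> range u"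
  then have "summable (\<lambda>j. inverse (norm (u j)))"
    by (intro summable_inverse_norm_of_quadratic_growth[of c]) auto
  with assms show "\<exists>P. (\<forall>k. (\<lambda>i. (1 - u 0 / u (i + k + 1)) / (1 - z / u (i + k + 1))) has_prod P k) \<and>
               (\<lambda>k. 1 / (z - u k) * P k) sums (1 / (z - u 0))"
    using partial_fraction_expansion_infinite[of u z] by (intro exI conjI allI) auto
qed

end
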